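(* Let $\vec{G_1},\dots,\vec{G_k}$ be pairwise vertex-disjoint oriented graphs such that $\vec{G_1}$ is a DDMOG and, for every $2\le i\le k$, $\vec{G_i}$ is a DDMOG with $imb(\vec{G_i})=0$. Then the union $\vec{G}=\bigcup_{i=1}^k\vec{G_i}$ is a DDMOG.
   Context: An oriented graph is a finite digraph without loops such that whenever $(u,v)$ is an arc, $(v,u)$ is not. For a vertex $v$, $N^+(v)=\{x:(x,v)\text{ is an arc}\}$, $N^-(v)=\{x:(v,x)\text{ is an arc}\}$, $imb(v)=|N^+(v)|-|N^-(v)|$, and $imb(\vec{G})=\max_v|imb(v)|$. For a labeling $f$, $wt_f(v)=\sum_{x\in N^+(v)}f(x)-\sum_{x\in N^-(v)}f(x)$. A DDM labeling of an oriented graph on $n$ vertices is a bijection $f:V\to\{1,\dots,n\}$ with $wt_f(v)=0$ for all $v$; a DDMOG is an oriented graph admitting a DDM labeling. *)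

theory Defs
  imports Main
begin

definition oriented_graph :: "'a set \<Rightarrow> ('a \<times> 'a) set \<Rightarrow> bool" where
  "oriented_graph V A \<longleftrightarrow> finite V \<and> A \<subseteq> V \<times> V \<and> (\<forall>v. (v, v) \<notin> A)
     \<and> (\<forall>u v. (u, v) \<in> A \<longrightarrow> (v, u) \<notin> A)"

text \<open>N^+(v) = {x. (x,v) arc}, N^-(v) = {x. (v,x) arc} (paper's convention).\<close>
definition in_nbrs :: "('a \<times> 'a) set \<Rightarrow> 'a \<Rightarrow> 'a set" where
  "in_nbrs A v = {x. (x, v) \<in> A}"

definition out_nbrs :: "('a \<times> 'a) set \<Rightarrow> 'a \<Rightarrow> 'a set" where
  "out_nbrs A v = {x. (v, x) \<in> A}"

definition imb :: "('a \<times> 'a) set \<Rightarrow> 'a \<Rightarrow> int" where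
  "imb A v = int (card (in_nbrs A v)) - int (card (out_nbrs A v))"

definition imb_graph :: "'a set \<Rightarrow> ('a \<times> 'a) set \<Rightarrow> int" where
  "imb_graph V A = (if V = {} then 0 else Max ((\<lambda>v. \<bar>imb A v\<bar>) ` V))"

definition wt :: "('a \<times> 'a) set \<Rightarrow> ('a \<Rightarrow> nat) \<Rightarrow> 'a \<Rightarrow> int" where
  "wt A f v = (\<Sum>x\<in>in_nbrs A v. int (f x)) - (\<Sum>x\<in>out_nbrs A v. int (f x))"

definition DDM_labeling :: "'a set \<Rightarrow> ('a \<times> 'a) set \<Rightarrow> ('a \<Rightarrow> nat) \<Rightarrow> bool" where
  "DDM_labeling V A f \<longleftrightarrow> bij_betw f V {1..card V} \<and> (\<forall>v\<in>V. wt A f v = 0)"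

definition DDMOG :: "'a set \<Rightarrow> ('a \<times> 'a) set \<Rightarrow> bool" where
  "DDMOG V A \<longleftrightarrow> oriented_graph V A \<and> (\<exists>f. DDM_labeling V A f)"

end

theory Submission
  imports Defs
begin

text \<open>Place the labels of the balanced graph \<open>G\<^sub>2\<close> after those of \<open>G\<^sub>1\<close>: on \<open>G\<^sub>1\<close> nothing
  changes, and on \<open>G\<^sub>2\<close> the shift by \<open>|V(G\<^sub>1)|\<close> alters the weight of \<open>v\<close> by
  \<open>|V(G\<^sub>1)| \<cdot> imb(v) = 0\<close>.\<close>

lemma imb_eq_0_if_imb_graph_eq_0:
  assumes "finite V" "imb_graph V A = 0" "v \<in> V"
  shows "imb A v = 0"
proof -
  have "\<bar>imb A v\<bar> \<le> Max ((\<lambda>v. \<bar>imb A v\<bar>) ` V)"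
    using assms(1,3) by (intro Max_ge) auto
  with assms(2,3) show ?thesis unfolding imb_graph_def by (auto split: if_splits)
qed

lemma oriented_graph_Un:
  assumes "oriented_graph V1 A1" "oriented_graph V2 A2" "V1 \<inter> V2 = {}"
  shows "oriented_graph (V1 \<union> V2) (A1 \<union> A2)"
  using assms unfolding oriented_graph_def by blast

lemma nbrs_subset:
  assumes "A \<subseteq> V \<times> V"
  shows "in_nbrs A v \<subseteq> V" "out_nbrs A v \<subseteq> V"
  using assms unfolding in_nbrs_def out_nbrs_def by auto

lemma nbrs_Un_eq_left:
  assumes "A2 \<subseteq> V2 \<times> V2" "v \<notin> V2"
  shows "in_nbrs (A1 \<union> A2) v = in_nbrs A1 v" "out_nbrs (A1 \<union> A2) v = out_nbrs A1 v"
  using assms unfolding in_nbrs_def out_nbrs_def by auto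

lemma wt_Un_eq_left:
  assumes "A2 \<subseteq> V2 \<times> V2" "v \<notin> V2"
  shows "wt (A1 \<union> A2) f v = wt A1 f v"
  using nbrs_Un_eq_left[OF assms] unfolding wt_def by simp

lemma wt_cong:
  assumes "\<And>x. x \<in> in_nbrs A v \<union> out_nbrs A v \<Longrightarrow> f x = g x"
  shows "wt A f v = wt A g v"
  using assms unfolding wt_def by (intro arg_cong2[where f = "(-)"] sum.cong) auto

lemma wt_shift: "wt A (\<lambda>x. f x + c) v = wt A f v + int c * imb A v"
  unfolding wt_def imb_def by (simp add: sum.distrib algebra_simps)

lemma bij_betw_append_labelings:
  assumes "bij_betw f1 V1 {1..card V1}" "bij_betw f2 V2 {1..card V2}" "V1 \<inter> V2 = {}"
  shows "bij_betw (\<lambda>v. if v \<in> V1 then f1 v else f2 v + card V1) (V1 \<union> V2) {1..card (V1 \<union> V2)}"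
    (is "bij_betw ?f _ _")
proof -
  have "finite V1" "finite V2"
    using assms(1,2) by (metis bij_betw_finite finite_atLeastAtMost)+
  have shift: "bij_betw (\<lambda>x. x + card V1) {1..card V2} {1 + card V1..card V2 + card V1}"
    unfolding bij_betw_def by (simp add: inj_on_def)
  have "bij_betw ?f V1 {1..card V1}"
    using assms(1) by (rule bij_betw_cong[THEN iffD1, rotated]) simp
  moreover have "bij_betw ?f V2 {1 + card V1..card V2 + card V1}"
    using bij_betw_trans[OF assms(2) shift]
    by (rule bij_betw_cong[THEN iffD1, rotated]) (use assms(3) in auto)
  ultimately have "bij_betw ?f (V1 \<union> V2) ({1..card V1} \<union> {1 + card V1..card V2 + card V1})"
    by (rule bij_betw_combine) auto
  moreover have "{1..card V1} \<union> {1 + card V1..card V2 + card V1} = {1..card (V1 \<union> V2)}"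
    using \<open>finite V1\<close> \<open>finite V2\<close> assms(3) by (auto simp: card_Un_disjoint)
  ultimately show ?thesis by simp
qed

lemma DDMOG_Un:
  assumes G1: "DDMOG V1 A1" and G2: "DDMOG V2 A2" and balanced: "imb_graph V2 A2 = 0"
    and disjoint: "V1 \<inter> V2 = {}"
  shows "DDMOG (V1 \<union> V2) (A1 \<union> A2)"
proof -
  obtain f1 where f1: "bij_betw f1 V1 {1..card V1}" "\<forall>v\<in>V1. wt A1 f1 v = 0"
    using G1 unfolding DDMOG_def DDM_labeling_def by blast
  obtain f2 where f2: "bij_betw f2 V2 {1..card V2}" "\<forall>v\<in>V2. wt A2 f2 v = 0"
    using G2 unfolding DDMOG_def DDM_labeling_def by blast
  have og1: "oriented_graph V1 A1" and og2: "oriented_graph V2 A2"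
    using G1 G2 unfolding DDMOG_def by blast+
  then have A1: "A1 \<subseteq> V1 \<times> V1" and A2: "A2 \<subseteq> V2 \<times> V2" and "finite V2"
    unfolding oriented_graph_def by blast+
  define f where "f = (\<lambda>v. if v \<in> V1 then f1 v else f2 v + card V1)"
  have "wt (A1 \<union> A2) f v = 0" if "v \<in> V1" for v
  proof -
    have "wt (A1 \<union> A2) f v = wt A1 f v"
      using A2 disjoint \<open>v \<in> V1\<close> by (intro wt_Un_eq_left) auto
    also have "\<dots> = wt A1 f1 v"
      using nbrs_subset[OF A1] by (intro wt_cong) (auto simp: f_def)
    finally show ?thesis using f1(2) \<open>v \<in> V1\<close> by simp
  qed
  moreover have "wt (A1 \<union> A2) f v = 0" if "v \<in> V2" for v
  proof -
    have "wt (A1 \<union> A2) f v = wt A2 f v"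
      using wt_Un_eq_left[OF A1, of v A2] disjoint \<open>v \<in> V2\<close> by (auto simp: Un_commute)
    also have "\<dots> = wt A2 (\<lambda>x. f2 x + card V1) v"
      using nbrs_subset[OF A2, of v] disjoint by (intro wt_cong) (auto simp: f_def)
    also have "\<dots> = int (card V1) * imb A2 v"
      unfolding wt_shift using f2(2) \<open>v \<in> V2\<close> by simp
    finally show ?thesis
      using imb_eq_0_if_imb_graph_eq_0[OF \<open>finite V2\<close> balanced \<open>v \<in> V2\<close>] by simp
  qed
  moreover have "bij_betw f (V1 \<union> V2) {1..card (V1 \<union> V2)}"
    unfolding f_def using f1(1) f2(1) disjoint by (rule bij_betw_append_labelings)
  ultimately have "DDM_labeling (V1 \<union> V2) (A1 \<union> A2) f"
    unfolding DDM_labeling_def by blast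
  with oriented_graph_Un[OF og1 og2 disjoint] show ?thesis
    unfolding DDMOG_def by blast
qed

theorem theorem5:
  fixes V :: "nat \<Rightarrow> 'a set" and A :: "nat \<Rightarrow> ('a \<times> 'a) set" and k :: nat
  assumes "k \<ge> 1"
    and "\<forall>i\<in>{1..k}. oriented_graph (V i) (A i)"
    and "\<forall>i\<in>{1..k}. \<forall>j\<in>{1..k}. i \<noteq> j \<longrightarrow> V i \<inter> V j = {}"
    and "DDMOG (V 1) (A 1)"
    and "\<forall>i\<in>{2..k}. DDMOG (V i) (A i) \<and> imb_graph (V i) (A i) = 0"
  shows "DDMOG (\<Union>i\<in>{1..k}. V i) (\<Union>i\<in>{1..k}. A i)"
proof -
  have "DDMOG (\<Union>i\<in>{1..m}. V i) (\<Union>i\<in>{1..m}. A i)" if "1 \<le> m" "m \<le> k" for m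
    using that
  proof (induction m rule: nat_induct_at_least)
    case base
    then show ?case using assms(4) by simp
  next
    case (Suc m)
    have "V i \<inter> V (Suc m) = {}" if "i \<in> {1..m}" for i
      using assms(3) that Suc.prems by auto
    then have "(\<Union>i\<in>{1..m}. V i) \<inter> V (Suc m) = {}"
      by blast
    moreover have "DDMOG (V (Suc m)) (A (Suc m))" "imb_graph (V (Suc m)) (A (Suc m)) = 0"
      using assms(5) Suc.hyps Suc.prems by auto
    ultimately have "DDMOG ((\<Union>i\<in>{1..m}. V i) \<union> V (Suc m)) ((\<Union>i\<in>{1..m}. A i) \<union> A (Suc m))"
      using Suc.IH Suc.prems by (intro DDMOG_Un) auto
    moreover have "{1..Suc m} = insert (Suc m) {1..m}"
      using Suc.hyps by (simp add: atLeastAtMostSuc_conv)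
    ultimately show ?case
      by (simp only: UN_insert Un_commute)
  qed
  then show ?thesis using assms(1) by simp
qed

end
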